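(* Let $k\in\mathbb N$, $a=\pi/k$, $\alpha,\beta\in\{0,1\}$, $q\in L_2(0,\pi)$, and let $W_{\alpha,\beta}=\frac{(-1)^{\alpha\beta}}{2}Q^{-1}A_{\alpha,\beta}Rq$ (notation in the context). Then in the degenerate case: (i) if $\alpha=\beta=0$: $\displaystyle\sum_{j=0}^{[(k-1)/2]}W_{0,0}(2ja+t)+\sum_{j=1}^{[k/2]}W_{0,0}(2ja-t)=0$ a.e. on $(0,a)$; (ii) if $\alpha=1,\beta=0$ and $k$ is odd: $\displaystyle\sum_{j=0}^{(k-1)/2}(-1)^jW_{1,0}(2ja+t)=\sum_{j=1}^{(k-1)/2}(-1)^jW_{1,0}(2ja-t)$ a.e. on $(0,a)$; (iii) if $\alpha=\beta=1$ and $k$ is even: $\displaystyle\sum_{j=0}^{k/2-1}(-1)^jW_{1,1}(2ja+t)+\sum_{j=1}^{k/2}(-1)^jW_{1,1}(2ja-t)=0$ a.e. on $(0,a)$. Here $[x]$ denotes the integer part of $x$.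
   Context: For $f\in L_2(0,\pi)$, $t\in(0,a)$, $m=1,\dots,k$: $R_mf(t)=f(t+(k-m)a)$ for odd $m$ and $R_mf(t)=f((k-m+1)a-t)$ for even $m$; $Q_mf(t)=f(t+(m-1)a)$ for odd $m$ and $Q_mf(t)=f(ma-t)$ for even $m$. The (invertible) operators $R,Q:L_2(0,\pi)\to(L_2(0,a))^k$ are $Rf=(R_1f,\dots,R_kf)^T$, $Qf=(Q_1f,\dots,Q_kf)^T$. Let $b=(-1)^{\alpha+\beta}$, $c=(-1)^{1+\beta}$. For $k>1$, $A_{\alpha,\beta}$ is the $k\times k$ tridiagonal matrix whose $(1,1)$ entry is $1$, whose $(k,k)$ entry is $c$, whose other diagonal entries are $0$, whose superdiagonal entries are all $b$ and whose subdiagonal entries are all $c$; for $k=1$, $A_{\alpha,\beta}=2(-1)^{\alpha(\beta+1)}\delta_{1,\beta}$. (For $k>1$ this $W_{\alpha,\beta}$ equals $\frac{(-1)^{\alpha\beta}}2\,(q((k-1)a+t)+bq((k-1)a-t))$ on $(0,a)$, $\frac{(-1)^{\alpha\beta}}2(cq((k+1)a-t)+bq((k-1)a-t))$ on $(a,(k-1)a)$, and $\frac{(-1)^{\alpha\beta}}2c(q((k+1)a-t)+q(t-(k-1)a))$ on $((k-1)a,ka)$.) The degenerate case means one of: (i) $\alpha=\beta=0$; (ii) $\alpha=1,\beta=0$, $k$ odd; (iii) $\alpha=\beta=1$, $k$ even. $W_{\alpha,\beta}$ is the function appearing in the representation of the characteristic function of the problem $-y''+q(x)y(a)=\lambda y$,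 $y^{(\alpha)}(0)=y^{(\beta)}(\pi)=0$. *)

theory Defs
  imports "HOL-Analysis.Analysis"
begin

definition step :: "nat \<Rightarrow> real" where
  "step k = pi / real k"

text \<open>Component operators R_m (1-based index m), acting on f, evaluated at t in (0,a).\<close>
definition Rop :: "nat \<Rightarrow> (real \<Rightarrow> complex) \<Rightarrow> nat \<Rightarrow> real \<Rightarrow> complex" where
  "Rop k f m t = (if odd m then f (t + real (k - m) * step k)
                  else f (real (k - m + 1) * step k - t))"

definition Qop :: "nat \<Rightarrow> (real \<Rightarrow> complex) \<Rightarrow> nat \<Rightarrow> real \<Rightarrow> complex" where
  "Qop k f m t = (if odd m then f (t + real (m - 1) * step k)
                  else f (real m * step k - t))"

text \<open>At the (measure zero) grid points it is set to 0.\<close>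
definition Qinv :: "nat \<Rightarrow> (nat \<Rightarrow> real \<Rightarrow> complex) \<Rightarrow> real \<Rightarrow> complex" where
  "Qinv k g x = (\<Sum>m=1..k. if real (m - 1) * step k < x \<and> x < real m * step k
       then (if odd m then g m (x - real (m - 1) * step k) else g m (real m * step k - x))
       else 0)"

definition Amat :: "nat \<Rightarrow> nat \<Rightarrow> nat \<Rightarrow> nat \<Rightarrow> nat \<Rightarrow> real" where
  "Amat \<alpha> \<beta> k m n =
    (if k = 1 then (if \<beta> = 1 then 2 * (-1) ^ (\<alpha> * (\<beta> + 1)) else 0)
     else if m = n then (if m = 1 then 1 else if m = k then (-1) ^ (1 + \<beta>) else 0)
     else if n = m + 1 then (-1) ^ (\<alpha> + \<beta>)
     else if m = n + 1 then (-1) ^ (1 + \<beta>)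
     else 0)"

definition W :: "nat \<Rightarrow> nat \<Rightarrow> nat \<Rightarrow> (real \<Rightarrow> complex) \<Rightarrow> real \<Rightarrow> complex" where
  "W \<alpha> \<beta> k q x = complex_of_real ((-1) ^ (\<alpha> * \<beta>) / 2) *
     Qinv k (\<lambda>m t. \<Sum>n=1..k. complex_of_real (Amat \<alpha> \<beta> k m n) * Rop k q n t) x"

end

theory Submission
  imports Defs
begin

text \<open>On the cell \<open>((m-1)a, ma)\<close> the function \<open>W\<^sub>\<alpha>\<^sub>,\<^sub>\<beta>\<close> is, up to the reflection built into
  \<open>Q\<close>, the \<open>m\<close>-th component of \<open>A\<^sub>\<alpha>\<^sub>,\<^sub>\<beta> R q\<close>. The points \<open>2ja + t\<close> and \<open>2ja - t\<close> run through
  the odd and even cells, so each left-hand side is \<open>\<Sum>\<^sub>m w\<^sub>m (A R q)\<^sub>m(t)\<close> for the weights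
  \<open>w = (1,\<dots>,1)\<close>, \<open>w\<^sub>m = (-1)^((m-1) div 2)\<close>, \<open>w\<^sub>m = (-1)^(m div 2)\<close> respectively. In each
  degenerate case this \<open>w\<close> is a left null vector of \<open>A\<^sub>\<alpha>\<^sub>,\<^sub>\<beta>\<close>, so the identities hold at
  every \<open>t \<in> (0,a)\<close>.\<close>

lemma Qinv_on_cell:
  assumes "1 \<le> m" "m \<le> k" "real (m - 1) * step k < x" "x < real m * step k"
  shows "Qinv k g x =
    (if odd m then g m (x - real (m - 1) * step k) else g m (real m * step k - x))"
proof -
  have step_pos: "step k > 0" using assms by (simp add: step_def)
  have only_m: "real (n - 1) * step k < x \<and> x < real n * step k \<longleftrightarrow> n = m"
    if "n \<in> {1..k}" for n
  proof
    assume "real (n - 1) * step k < x \<and> x < real n * step k"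
    with assms step_pos have "real (n - 1) < real m" "real (m - 1) < real n"
      by (meson le_less_trans less_le_trans mult_right_less_imp_less less_imp_le)+
    then show "n = m" using that assms by linarith
  qed (use assms in auto)
  have "Qinv k g x = (\<Sum>n=1..k. if n = m
      then (if odd m then g m (x - real (m - 1) * step k) else g m (real m * step k - x)) else 0)"
    unfolding Qinv_def by (rule sum.cong[OF refl]) (simp only: only_m, simp)
  then show ?thesis using assms by (simp add: sum.delta)
qed

definition ARq :: "nat \<Rightarrow> nat \<Rightarrow> nat \<Rightarrow> (real \<Rightarrow> complex) \<Rightarrow> nat \<Rightarrow> real \<Rightarrow> complex" where
  "ARq \<alpha> \<beta> k q m t = (\<Sum>n=1..k. complex_of_real (Amat \<alpha> \<beta> k m n) * Rop k q n t)"

lemma W_on_odd_cell: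
  assumes "2 * j + 1 \<le> k" "0 < t" "t < step k"
  shows "W \<alpha> \<beta> k q (2 * real j * step k + t)
    = complex_of_real ((-1) ^ (\<alpha> * \<beta>) / 2) * ARq \<alpha> \<beta> k q (2 * j + 1) t"
  unfolding W_def ARq_def[symmetric]
  by (subst Qinv_on_cell[where m = "2 * j + 1"]) (use assms in \<open>auto simp: algebra_simps\<close>)

lemma W_on_even_cell:
  assumes "2 * j \<le> k" "1 \<le> j" "0 < t" "t < step k"
  shows "W \<alpha> \<beta> k q (2 * real j * step k - t)
    = complex_of_real ((-1) ^ (\<alpha> * \<beta>) / 2) * ARq \<alpha> \<beta> k q (2 * j) t"
  unfolding W_def ARq_def[symmetric]
  by (subst Qinv_on_cell[where m = "2 * j"]) (use assms in \<open>auto simp: algebra_simps of_nat_diff\<close>)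

lemma sum_odd_even_split:
  fixes F :: "nat \<Rightarrow> 'a::comm_monoid_add"
  assumes "k \<ge> 1"
  shows "(\<Sum>j=0..(k - 1) div 2. F (2 * j + 1)) + (\<Sum>j=1..k div 2. F (2 * j)) = (\<Sum>m=1..k. F m)"
  using assms
proof (induction k rule: nat_induct_at_least)
  case base
  then show ?case by simp
next
  case (Suc k)
  show ?case
  proof (cases "even k")
    case True
    then obtain i where "k = 2 * i" by blast
    with Suc.hyps have "(\<Sum>j=0..(Suc k - 1) div 2. F (2 * j + 1))
        = (\<Sum>j=0..(k - 1) div 2. F (2 * j + 1)) + F (Suc k)" and "Suc k div 2 = k div 2"
      by (cases i; simp)+
    then show ?thesis using Suc.IH by (simp add: ac_simps)
  next
    case False
    then obtain i where "k = 2 * i + 1" using oddE by blast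
    then have "(Suc k - 1) div 2 = (k - 1) div 2"
      and "(\<Sum>j=1..Suc k div 2. F (2 * j)) = (\<Sum>j=1..k div 2. F (2 * j)) + F (Suc k)"
      by simp_all
    then show ?thesis using Suc.IH by (simp add: add.assoc[symmetric])
  qed
qed

lemma weighted_ARq_sum_eq_zero:
  fixes w :: "nat \<Rightarrow> real"
  assumes "\<And>n. n \<in> {1..k} \<Longrightarrow> (\<Sum>m=1..k. w m * Amat \<alpha> \<beta> k m n) = 0"
  shows "(\<Sum>m=1..k. complex_of_real (w m) * ARq \<alpha> \<beta> k q m t) = 0"
proof -
  have "(\<Sum>m=1..k. complex_of_real (w m) * ARq \<alpha> \<beta> k q m t)
      = (\<Sum>n=1..k. complex_of_real (\<Sum>m=1..k. w m * Amat \<alpha> \<beta> k m n) * Rop k q n t)"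
    unfolding ARq_def
    by (simp add: sum_distrib_left sum_distrib_right mult.assoc) (rule sum.swap)
  also have "\<dots> = 0" using assms by simp
  finally show ?thesis .
qed

lemma Amat_column_sum:
  fixes w :: "nat \<Rightarrow> real"
  assumes "k > 1" "n \<in> {1..k}"
  shows "(\<Sum>m=1..k. w m * Amat \<alpha> \<beta> k m n) =
     w n * (if n = 1 then 1 else if n = k then (-1) ^ (1 + \<beta>) else 0)
     + (if 2 \<le> n then w (n - 1) * (-1) ^ (\<alpha> + \<beta>) else 0)
     + (if n < k then w (n + 1) * (-1) ^ (1 + \<beta>) else 0)"
proof -
  have "(\<Sum>m=1..k. w m * Amat \<alpha> \<beta> k m n) =
     (\<Sum>m=1..k. (if m = n then w n * (if n = 1 then 1 else if n = k then (-1) ^ (1 + \<beta>) else 0) else 0)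
     + (if m = n - 1 then (if 2 \<le> n then w (n - 1) * (-1) ^ (\<alpha> + \<beta>) else 0) else 0)
     + (if m = n + 1 then w (n + 1) * (-1) ^ (1 + \<beta>) else 0))"
    using assms by (intro sum.cong) (auto simp: Amat_def)
  moreover have "2 \<le> n \<Longrightarrow> n - 1 \<in> {1..k}" "n + 1 \<in> {1..k} \<longleftrightarrow> n < k"
    using assms by auto
  ultimately show ?thesis
    using assms by (simp add: sum.distrib)
qed

lemma Amat_left_null:
  fixes w :: "nat \<Rightarrow> real"
  assumes "k > 1"
    and first: "w 1 + (-1) ^ (1 + \<beta>) * w 2 = 0"
    and middle: "\<And>p. 1 \<le> p \<Longrightarrow> p + 2 \<le> k \<Longrightarrow> (-1) ^ (\<alpha> + \<beta>) * w p + (-1) ^ (1 + \<beta>) * w (p + 2) = 0"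
    and last: "(-1) ^ (\<alpha> + \<beta>) * w (k - 1) + (-1) ^ (1 + \<beta>) * w k = 0"
    and "n \<in> {1..k}"
  shows "(\<Sum>m=1..k. w m * Amat \<alpha> \<beta> k m n) = 0"
proof -
  have "2 \<le> n \<Longrightarrow> n < k \<Longrightarrow> (-1) ^ (\<alpha> + \<beta>) * w (n - 1) + (-1) ^ (1 + \<beta>) * w (n + 1) = 0"
    using middle[of "n - 1"] by (simp add: Suc_diff_le numeral_2_eq_2)
  then show ?thesis
    using Amat_column_sum[OF assms(1,5), where w = w and \<alpha> = \<alpha> and \<beta> = \<beta>] first last assms(1,5)
    by (cases "n = 1") (auto simp: algebra_simps numeral_2_eq_2)
qed

lemma weighted_W_sum_eq_zero:
  fixes w :: "nat \<Rightarrow> real"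
  assumes "k \<ge> 1" "0 < t" "t < step k"
    and "\<And>n. n \<in> {1..k} \<Longrightarrow> (\<Sum>m=1..k. w m * Amat \<alpha> \<beta> k m n) = 0"
  shows "(\<Sum>j=0..(k - 1) div 2. complex_of_real (w (2 * j + 1)) * W \<alpha> \<beta> k q (2 * real j * step k + t))
     + (\<Sum>j=1..k div 2. complex_of_real (w (2 * j)) * W \<alpha> \<beta> k q (2 * real j * step k - t)) = 0"
proof -
  let ?c = "complex_of_real ((-1) ^ (\<alpha> * \<beta>) / 2)"
  let ?F = "\<lambda>m. complex_of_real (w m) * ARq \<alpha> \<beta> k q m t"
  have odd_cells: "(\<Sum>j=0..(k - 1) div 2. complex_of_real (w (2 * j + 1)) * W \<alpha> \<beta> k q (2 * real j * step k + t))
      = ?c * (\<Sum>j=0..(k - 1) div 2. ?F (2 * j + 1))"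
    unfolding sum_distrib_left
  proof (rule sum.cong)
    fix j assume "j \<in> {0..(k - 1) div 2}"
    then have "2 * j + 1 \<le> k" using assms(1) by auto
    then show "complex_of_real (w (2 * j + 1)) * W \<alpha> \<beta> k q (2 * real j * step k + t) = ?c * ?F (2 * j + 1)"
      using W_on_odd_cell assms(2,3) by simp
  qed simp
  have even_cells: "(\<Sum>j=1..k div 2. complex_of_real (w (2 * j)) * W \<alpha> \<beta> k q (2 * real j * step k - t))
      = ?c * (\<Sum>j=1..k div 2. ?F (2 * j))"
    unfolding sum_distrib_left
  proof (rule sum.cong)
    fix j assume "j \<in> {1..k div 2}"
    then have "2 * j \<le> k" "1 \<le> j" by auto
    then show "complex_of_real (w (2 * j)) * W \<alpha> \<beta> k q (2 * real j * step k - t) = ?c * ?F (2 * j)"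
      using W_on_even_cell assms(2,3) by simp
  qed simp
  have "(\<Sum>j=0..(k - 1) div 2. ?F (2 * j + 1)) + (\<Sum>j=1..k div 2. ?F (2 * j)) = 0"
    unfolding sum_odd_even_split[OF assms(1), of ?F] by (rule weighted_ARq_sum_eq_zero[OF assms(4)])
  then show ?thesis
    unfolding odd_cells even_cells distrib_left[symmetric] by simp
qed

lemma W00_identity:
  assumes "k \<ge> 1" "0 < t" "t < step k"
  shows "(\<Sum>j=0..(k - 1) div 2. W 0 0 k q (2 * real j * step k + t))
       + (\<Sum>j=1..k div 2. W 0 0 k q (2 * real j * step k - t)) = 0"
proof -
  have "(\<Sum>m=1..k. 1 * Amat 0 0 k m n) = 0" if "n \<in> {1..k}" for n
  proof (cases "k = 1")
    case False
    with assms that show ?thesis by (intro Amat_left_null) auto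
  qed (simp add: Amat_def)
  then show ?thesis using weighted_W_sum_eq_zero[OF assms, of "\<lambda>_. 1"] by simp
qed

lemma W10_identity:
  assumes "odd k" "0 < t" "t < step k"
  shows "(\<Sum>j=0..(k - 1) div 2. (-1) ^ j * W 1 0 k q (2 * real j * step k + t))
       = (\<Sum>j=1..(k - 1) div 2. (-1) ^ j * W 1 0 k q (2 * real j * step k - t))"
proof -
  define w :: "nat \<Rightarrow> real" where "w m = (-1) ^ ((m - 1) div 2)" for m
  obtain i where k: "k = 2 * i + 1" using assms(1) oddE by blast
  have w_even: "w (2 * j) = - ((-1) ^ j)" if "1 \<le> j" for j
    using that by (cases j) (simp_all add: w_def)
  have "(\<Sum>m=1..k. w m * Amat 1 0 k m n) = 0" if "n \<in> {1..k}" for n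
  proof (cases "i = 0")
    case False
    show ?thesis
    proof (rule Amat_left_null)
      show "(-1) ^ (1 + 0) * w p + (-1) ^ (1 + 0) * w (p + 2) = 0" if "1 \<le> p" for p
        using that by (cases p) (simp_all add: w_def)
      show "(-1) ^ (1 + 0) * w (k - 1) + (-1) ^ (1 + 0) * w k = 0"
        using False k w_even[of i] by (simp add: w_def)
    qed (use False k that in \<open>simp_all add: w_def\<close>)
  qed (use k in \<open>simp add: Amat_def\<close>)
  from weighted_W_sum_eq_zero[OF _ assms(2,3) this, of q]
  have sum_zero: "(\<Sum>j=0..(k - 1) div 2. (-1) ^ j * W 1 0 k q (2 * real j * step k + t))
      + (\<Sum>j=1..k div 2. complex_of_real (w (2 * j)) * W 1 0 k q (2 * real j * step k - t)) = 0"
    using k by (simp add: w_def)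
  have "(\<Sum>j=1..k div 2. complex_of_real (w (2 * j)) * W 1 0 k q (2 * real j * step k - t))
      = - (\<Sum>j=1..(k - 1) div 2. (-1) ^ j * W 1 0 k q (2 * real j * step k - t))"
    unfolding sum_negf[symmetric] using k by (intro sum.cong) (simp_all add: w_even)
  with sum_zero show ?thesis by simp
qed

lemma W11_identity:
  assumes "even k" "k \<ge> 1" "0 < t" "t < step k"
  shows "(\<Sum>j=0..k div 2 - 1. (-1) ^ j * W 1 1 k q (2 * real j * step k + t))
       + (\<Sum>j=1..k div 2. (-1) ^ j * W 1 1 k q (2 * real j * step k - t)) = 0"
proof -
  define w :: "nat \<Rightarrow> real" where "w m = (-1) ^ (m div 2)" for m
  obtain j where "k = 2 * j" using assms(1) by blast
  with assms(2) have "k = 2 * (j - 1) + 2" by simp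
  then obtain i where k: "k = 2 * i + 2" by blast
  have "(\<Sum>m=1..k. w m * Amat 1 1 k m n) = 0" if "n \<in> {1..k}" for n
  proof (rule Amat_left_null)
    show "(-1) ^ (1 + 1) * w p + (-1) ^ (1 + 1) * w (p + 2) = 0" for p
      by (simp add: w_def)
    show "(-1) ^ (1 + 1) * w (k - 1) + (-1) ^ (1 + 1) * w k = 0"
      using k by (simp add: w_def)
  qed (use k that in \<open>simp_all add: w_def\<close>)
  from weighted_W_sum_eq_zero[OF assms(2-4) this, of q]
  have "(\<Sum>j=0..(k - 1) div 2. (-1) ^ j * W 1 1 k q (2 * real j * step k + t))
      + (\<Sum>j=1..k div 2. (-1) ^ j * W 1 1 k q (2 * real j * step k - t)) = 0"
    by (simp add: w_def)
  moreover have "(k - 1) div 2 = k div 2 - 1" using k by simp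
  ultimately show ?thesis by simp
qed

theorem lemma3p1:
  fixes k :: nat and q :: "real \<Rightarrow> complex"
  assumes "k \<ge> 1"
    and "q \<in> borel_measurable (restrict_space lebesgue {0<..<pi})"
    and "integrable (restrict_space lebesgue {0<..<pi}) (\<lambda>x. (norm (q x))^2)"
  shows "(AE t in lebesgue. t \<in> {0<..<step k} \<longrightarrow>
            (\<Sum>j=0..(k - 1) div 2. W 0 0 k q (2 * real j * step k + t))
          + (\<Sum>j=1..k div 2. W 0 0 k q (2 * real j * step k - t)) = 0)
       \<and> (odd k \<longrightarrow> (AE t in lebesgue. t \<in> {0<..<step k} \<longrightarrow>
            (\<Sum>j=0..(k - 1) div 2. (-1) ^ j * W 1 0 k q (2 * real j * step k + t))
          = (\<Sum>j=1..(k - 1) div 2. (-1) ^ j * W 1 0 k q (2 * real j * step k - t))))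
       \<and> (even k \<longrightarrow> (AE t in lebesgue. t \<in> {0<..<step k} \<longrightarrow>
            (\<Sum>j=0..k div 2 - 1. (-1) ^ j * W 1 1 k q (2 * real j * step k + t))
          + (\<Sum>j=1..k div 2. (-1) ^ j * W 1 1 k q (2 * real j * step k - t)) = 0))"
  using W00_identity[OF assms(1)] W10_identity W11_identity[OF _ assms(1)]
  by (intro conjI impI AE_I2) auto

end
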